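(* Let $\alpha\in\mathbb R$, $\gamma,\delta\ge0$, $h>0$, $\tau>0$, and consider the Compact6 method with forward Euler time stepping applied to the linear equation $u_t+\alpha u_x=\gamma u_{xx}+\delta u_{xxt}$, whose amplification factor for the Fourier mode with phase $\theta$ is \[ \mathcal{L}(\theta)=\frac{\Big(1+\dfrac{\gamma\tau-\delta}{2h^2}P\Big)-\dfrac{i\alpha\tau}{6h}Q}{1-\dfrac{\delta}{2h^2}P},\qquad P=\frac{48\cos\theta+3\cos 2\theta-51}{11+4\cos\theta},\quad Q=\frac{28\sin\theta+\sin 2\theta}{3+2\cos\theta}. \] The method is stable, in the sense that $|\mathcal{L}(\theta)|^2\le 1+2C\tau$, if there exists a constant $C>0$ such that \[ \tau\le\frac{2\Big(1-\dfrac{\delta P}{2h^2}\Big)\Big(C-\dfrac{C\delta P}{2h^2}-\dfrac{\gamma P}{2h^2}\Big)}{\dfrac{\gamma^2P^2}{4h^4}+\dfrac{\alpha^2Q^2}{36h^2}}. \]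
   Context: The Compact6 method approximates $u_x$ and $u_{xx}$ at grid points $x_j$ (spacing $h$) by the sixth-order compact schemes $\tfrac13u'_{j-1}+u'_j+\tfrac13u'_{j+1}=\tfrac1h(-\tfrac1{36}u_{j-2}-\tfrac79u_{j-1}+\tfrac79u_{j+1}+\tfrac1{36}u_{j+2})$ and $\tfrac2{11}u''_{j-1}+u''_j+\tfrac2{11}u''_{j+1}=\tfrac1{h^2}(\tfrac3{44}u_{j-2}+\tfrac{12}{11}u_{j-1}-\tfrac{51}{22}u_j+\tfrac{12}{11}u_{j+1}+\tfrac3{44}u_{j+2})$, and time is discretized by forward Euler with step $\tau$, giving $u^{n+1}_j=\mathcal L(\theta)u^n_j$ for a Fourier mode $u_j=\hat u e^{ij\theta}$, $\theta=\omega h$. Stability (relaxed von Neumann) means $|\mathcal L(\theta)|\le 1+C\tau$, taken here in the form $|\mathcal L(\theta)|^2\le 1+2C\tau$. *)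

theory Defs
  imports Complex_Main
begin

definition compact6_P :: "real \<Rightarrow> real" where
  "compact6_P \<theta> = (48 * cos \<theta> + 3 * cos (2 * \<theta>) - 51) / (11 + 4 * cos \<theta>)"

definition compact6_Q :: "real \<Rightarrow> real" where
  "compact6_Q \<theta> = (28 * sin \<theta> + sin (2 * \<theta>)) / (3 + 2 * cos \<theta>)"

definition compact6_L :: "real \<Rightarrow> real \<Rightarrow> real \<Rightarrow> real \<Rightarrow> real \<Rightarrow> real \<Rightarrow> complex" where
  "compact6_L \<alpha> \<gamma> \<delta> h \<tau> \<theta> =
     (complex_of_real (1 + (\<gamma> * \<tau> - \<delta>) / (2 * h^2) * compact6_P \<theta>)
      - \<i> * complex_of_real (\<alpha> * \<tau> / (6 * h) * compact6_Q \<theta>))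
     / complex_of_real (1 - \<delta> / (2 * h^2) * compact6_P \<theta>)"

end

theory Submission
  imports Defs
begin

text \<open>Since \<open>P \<le> 0\<close>, the denominator \<open>B = 1 - \<delta> P/(2h\<^sup>2)\<close> of the amplification factor is at
  least 1. Writing \<open>x = \<gamma> P/(2h\<^sup>2)\<close> and \<open>y = \<alpha> Q/(6h)\<close>, the factor is
  \<open>(B + \<tau> x - i \<tau> y)/B\<close>, so \<open>|L|\<^sup>2 \<le> 1 + 2C\<tau>\<close> is equivalent to
  \<open>\<tau> (x\<^sup>2 + y\<^sup>2) \<le> 2B(CB - x)\<close>; the hypothesis on \<open>\<tau>\<close> is this inequality divided by
  \<open>x\<^sup>2 + y\<^sup>2\<close>, and when \<open>x\<^sup>2 + y\<^sup>2 = 0\<close> it holds trivially since then \<open>x = 0\<close>.\<close>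

lemma compact6_P_numerator_eq:
  fixes t :: real
  shows "48 * cos t + 3 * cos (2 * t) - 51 = 6 * (cos t - 1) * (cos t + 9)"
  unfolding cos_double_cos by (simp add: algebra_simps power2_eq_square)

lemma compact6_P_nonpos: "compact6_P t \<le> 0"
proof -
  have "6 * (cos t - 1) * (cos t + 9) \<le> 0"
  proof (rule mult_nonpos_nonneg)
    show "6 * (cos t - 1) \<le> 0" using cos_le_one[of t] by simp
    show "0 \<le> cos t + 9" using cos_ge_minus_one[of t] by linarith
  qed
  moreover have "11 + 4 * cos t > 0"
    using cos_ge_minus_one[of t] by linarith
  ultimately show ?thesis
    unfolding compact6_P_def compact6_P_numerator_eq by (simp add: divide_nonpos_pos)
qed

lemma cmod_diff_ii_divide_power2:
  "(cmod ((complex_of_real x - \<i> * complex_of_real y) / complex_of_real z))\<^sup>2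
     = (x\<^sup>2 + y\<^sup>2) / z\<^sup>2"
proof -
  have "complex_of_real x - \<i> * complex_of_real y = Complex x (- y)"
    by (simp add: complex_eq_iff)
  then show ?thesis
    by (simp add: norm_divide power_divide cmod_def add_divide_distrib)
qed

lemma cmod_compact6_L_power2:
  fixes \<alpha> \<gamma> \<delta> h \<tau> \<theta> :: real
  defines "B \<equiv> 1 - \<delta> / (2 * h\<^sup>2) * compact6_P \<theta>"
    and "x \<equiv> \<gamma> / (2 * h\<^sup>2) * compact6_P \<theta>"
    and "y \<equiv> \<alpha> / (6 * h) * compact6_Q \<theta>"
  shows "(cmod (compact6_L \<alpha> \<gamma> \<delta> h \<tau> \<theta>))\<^sup>2 = ((B + \<tau> * x)\<^sup>2 + (\<tau> * y)\<^sup>2) / B\<^sup>2"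
proof -
  have "1 + (\<gamma> * \<tau> - \<delta>) / (2 * h\<^sup>2) * compact6_P \<theta> = B + \<tau> * x"
    by (simp add: B_def x_def algebra_simps diff_divide_distrib)
  moreover have "\<alpha> * \<tau> / (6 * h) * compact6_Q \<theta> = \<tau> * y"
    by (simp add: y_def)
  ultimately show ?thesis
    unfolding compact6_L_def B_def[symmetric] by (simp only: cmod_diff_ii_divide_power2)
qed

lemma amplification_power2_le:
  fixes B x y \<tau> C :: real
  assumes "B \<noteq> 0" and "\<tau> \<ge> 0" and "\<tau> * (x\<^sup>2 + y\<^sup>2) \<le> 2 * B * (C * B - x)"
  shows "((B + \<tau> * x)\<^sup>2 + (\<tau> * y)\<^sup>2) / B\<^sup>2 \<le> 1 + 2 * C * \<tau>"
proof -
  have "(B + \<tau> * x)\<^sup>2 + (\<tau> * y)\<^sup>2 = B\<^sup>2 + \<tau> * (2 * B * x + \<tau> * (x\<^sup>2 + y\<^sup>2))"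
    by (simp add: power2_eq_square algebra_simps)
  also have "\<dots> \<le> B\<^sup>2 + \<tau> * (2 * C * B\<^sup>2)"
    using assms(2,3) by (intro add_left_mono mult_left_mono) (auto simp: power2_eq_square algebra_simps)
  also have "\<dots> = (1 + 2 * C * \<tau>) * B\<^sup>2"
    by (simp add: algebra_simps)
  finally show ?thesis
    using assms(1) by (simp add: pos_divide_le_eq)
qed

lemma mult_sum_squares_le_of_divide_bound:
  fixes B x y \<tau> C :: real
  assumes "C \<ge> 0" and "x\<^sup>2 + y\<^sup>2 \<noteq> 0 \<Longrightarrow> \<tau> \<le> 2 * B * (C * B - x) / (x\<^sup>2 + y\<^sup>2)"
  shows "\<tau> * (x\<^sup>2 + y\<^sup>2) \<le> 2 * B * (C * B - x)"
proof (cases "x\<^sup>2 + y\<^sup>2 = 0")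
  case True
  then show ?thesis
    using assms(1) by (simp add: mult.assoc[symmetric] power2_eq_square[symmetric])
next
  case False
  then have "x\<^sup>2 + y\<^sup>2 > 0"
    by (simp add: add_nonneg_eq_0_iff order_le_neq_trans)
  with False assms(2) show ?thesis
    by (simp add: pos_le_divide_eq)
qed

theorem theorem3:
  fixes \<alpha> \<gamma> \<delta> h \<tau> C :: real
  assumes "\<gamma> \<ge> 0" and "\<delta> \<ge> 0" and "h > 0" and "\<tau> > 0" and "C > 0"
    and bound: "\<forall>\<theta>::real.
      let P = compact6_P \<theta>; Q = compact6_Q \<theta>;
          D = \<gamma>^2 * P^2 / (4 * h^4) + \<alpha>^2 * Q^2 / (36 * h^2)
      in D \<noteq> 0 \<longrightarrow>
         \<tau> \<le> 2 * (1 - \<delta> * P / (2 * h^2)) * (C - C * \<delta> * P / (2 * h^2) - \<gamma> * P / (2 * h^2)) / D"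
  shows "\<forall>\<theta>::real. (cmod (compact6_L \<alpha> \<gamma> \<delta> h \<tau> \<theta>))^2 \<le> 1 + 2 * C * \<tau>"
proof
  fix \<theta> :: real
  define P where "P = compact6_P \<theta>"
  define B where "B = 1 - \<delta> / (2 * h\<^sup>2) * P"
  define x where "x = \<gamma> / (2 * h\<^sup>2) * P"
  define y where "y = \<alpha> / (6 * h) * compact6_Q \<theta>"
  have "P \<le> 0"
    using compact6_P_nonpos by (simp add: P_def)
  then have "B \<ge> 1"
    using assms(2,3) by (simp add: B_def mult_nonneg_nonpos divide_nonpos_pos)
  have "\<gamma>^2 * P^2 / (4 * h^4) + \<alpha>^2 * (compact6_Q \<theta>)^2 / (36 * h^2) = x\<^sup>2 + y\<^sup>2"
    using assms(3) by (simp add: x_def y_def power_divide power_mult_distrib field_simps)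
  then have "x\<^sup>2 + y\<^sup>2 \<noteq> 0 \<Longrightarrow> \<tau> \<le> 2 * B * (C * B - x) / (x\<^sup>2 + y\<^sup>2)"
    using bound[rule_format, of \<theta>] by (simp add: Let_def P_def[symmetric] B_def x_def algebra_simps)
  then have "\<tau> * (x\<^sup>2 + y\<^sup>2) \<le> 2 * B * (C * B - x)"
    using assms(5) by (intro mult_sum_squares_le_of_divide_bound) auto
  then have "((B + \<tau> * x)\<^sup>2 + (\<tau> * y)\<^sup>2) / B\<^sup>2 \<le> 1 + 2 * C * \<tau>"
    using \<open>B \<ge> 1\<close> assms(4) by (intro amplification_power2_le) auto
  moreover have "(cmod (compact6_L \<alpha> \<gamma> \<delta> h \<tau> \<theta>))\<^sup>2 = ((B + \<tau> * x)\<^sup>2 + (\<tau> * y)\<^sup>2) / B\<^sup>2"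
    unfolding B_def x_def y_def P_def by (rule cmod_compact6_L_power2)
  ultimately show "(cmod (compact6_L \<alpha> \<gamma> \<delta> h \<tau> \<theta>))^2 \<le> 1 + 2 * C * \<tau>"
    by simp
qed

end
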